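(* In the setting below, assume $Z^j\epsilon_{\bullet,j}\ne0$ for all $j$, that for some $c>1$ $$\lambda\ge\frac{c+1}{c-1}\max_{i\in[n]}\Big(\sum_{j\in[p]}\frac{(Z^j_{i,\bullet}\epsilon_{\bullet,j})^2}{\|Z^j\epsilon_{\bullet,j}\|_2^2}\Big)^{1/2},$$ and that there is a matrix $V\in\mathbb R^{n\times p}$ with $\|V_{i,\bullet}\|_2\le1$ for all $i$ such that for every $j\in[p]$, $\|Z^j\widehat\Delta_{\bullet,j}\|_2^2=\xi_{\bullet,j}^\top Z^j\widehat\Delta_{\bullet,j}-\lambda\|\widehat\xi_{\bullet,j}\|_2V_{\bullet,j}^\top\widehat\Delta_{\bullet,j}$, where $\widehat\xi_{\bullet,j}=Z^j(X^{(n)}_{\bullet,j}-\widehat\Theta_{\bullet,j})$. Then $$\sum_{j=1}^p\|Z^j\widehat\Delta_{\bullet,j}\|_2^2\le2\lambda\|\xi^\top\|_{2,\infty}\|\widehat\Delta\|_{2,1}\Big(\frac{c-1}{c+1}+2\Big)+\big(\lambda\|\widehat\Delta\|_{2,1}\big)^2.$$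
   Context: Setting. Let $n,p\ge 1$, $[n]=\{1,\dots,n\}$. $X=Y+E^*\in\mathbb R^{n\times p}$ where (C1) the rows of $Y$ are independent $\mathcal N_p(\mu^*,\Sigma^* )$, $\Sigma^*$ positive definite; (C2) $E^*$ deterministic, $[n]=I\cup O$ a partition with the rows of $E^*$ indexed by $I$ equal to zero, and every row of $E^*(\Sigma^* )^{-1/2}$ of Euclidean norm at most $M_E\sqrt p$; $\mu^*=0$. $\Omega^*=(\Sigma^* )^{-1}$ with diagonal entries $\omega^*_{jj}$, $B^*=\Omega^*\mathrm{diag}(\Omega^* )^{-1}$, $X^{(n)}=X/\sqrt n$, $\Theta^*=E^*B^*/\sqrt n$, $\xi=X^{(n)}B^*-\Theta^*$, $\epsilon_{ij}=\sqrt n(\omega^*_{jj})^{1/2}\xi_{ij}$. Notation: $A_{i,\bullet}$, $A_{\bullet,j}$ rows/columns, $j^c=[p]\setminus\{j\}$, $\|A\|_{2,1}=\sum_i\|A_{i,\bullet}\|_2$, $\|\xi^\top\|_{2,\infty}=\max_j\|\xi_{\bullet,j}\|_2$. $Z^j$ is the orthogonal projector in $\mathbb R^n$ onto the orthogonal complement of the span of the columns of $X_{\bullet,j^c}$. Estimator: $\widehat\Theta$ minimizes over $\Theta\in\mathbb R^{n\times p}$ the function $\sum_{j=1}^p\|Z^j(X^{(n)}_{\bullet,j}-\Theta_{\bullet,j})\|_2+\lambda\|\Theta\|_{2,1}$, and $\widehat\Delta=\widehat\Theta-\Theta^*$. *)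

theory Defs
  imports "HOL-Analysis.Analysis"
begin

definition orth_proj :: "'a::euclidean_space set \<Rightarrow> 'a \<Rightarrow> 'a" where
  "orth_proj W v = (THE z. z \<in> W \<and> v - z \<in> orthogonal_comp W)"

text \<open>Z^j: projector onto the orthogonal complement of the span of the columns of X
  indexed by j^c = [p] - {j}.  Matrices are real^'p^'n (n rows, p columns).\<close>
definition Zproj :: "real^'p^'n \<Rightarrow> 'p \<Rightarrow> real^'n \<Rightarrow> real^'n" where
  "Zproj X j = orth_proj (orthogonal_comp (span {column k X | k. k \<noteq> j}))"

definition pos_def_mat :: "real^'p^'p \<Rightarrow> bool" where
  "pos_def_mat S \<longleftrightarrow> transpose S = S \<and> (\<forall>x. x \<noteq> 0 \<longrightarrow> x \<bullet> (S *v x) > 0)"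

definition inv_sqrt_mat :: "real^'p^'p \<Rightarrow> real^'p^'p" where
  "inv_sqrt_mat S = (THE R. pos_def_mat R \<and> R ** R = matrix_inv S)"

definition norm21 :: "real^'p^'n \<Rightarrow> real" where
  "norm21 A = (\<Sum>i\<in>UNIV. norm (row i A))"

definition normT2inf :: "real^'p^'n \<Rightarrow> real" where
  "normT2inf A = Max (range (\<lambda>j. norm (column j A)))"

definition objective :: "real^'p^'n \<Rightarrow> real^'p^'n \<Rightarrow> real \<Rightarrow> real^'p^'n \<Rightarrow> real" where
  "objective X Xn lam \<Theta> =
     (\<Sum>j\<in>UNIV. norm (Zproj X j (column j Xn - column j \<Theta>))) + lam * norm21 \<Theta>"

end

theory Submission imports Defs begin

text \<open>Because B has unit diagonal and Z^j annihilates every column of X other than the j-th,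
  Z^j \<xi>_j = Z^j (X^(n)_j - \<Theta>*_j), so the residual Z^j (X^(n)_j - \<Theta>hat_j) equals
  Z^j (\<xi>_j - \<Delta>_j). Summing the stationarity identity over j, write S for the left-hand side.
  Row by row, Cauchy-Schwarz bounds the noise term \<Sum>_j \<langle>Z^j \<xi>_j, \<Delta>_j\<rangle> by the noise level
  (the maximum in the choice of \<lambda>, which is the same for \<epsilon> and \<xi> as their columns differ by
  nonzero factors) times ||\<xi>^T||_{2,\<infinity>} ||\<Delta>||_{2,1}, and the penalty term, using ||V_i|| \<le> 1,
  by \<lambda> (||\<xi>^T||_{2,\<infinity>} + sqrt S) ||\<Delta>||_{2,1}. Thus S \<le> a + b sqrt S, whence S \<le> 2a + b^2, and the
  choice of \<lambda> bounds the noise level by (c - 1)/(c + 1) \<lambda>.\<close>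

lemma orth_proj_unique:
  fixes W :: "'a::euclidean_space set"
  assumes "subspace W" and "z \<in> W" and "v - z \<in> orthogonal_comp W"
  shows "orth_proj W v = z"
  unfolding orth_proj_def
proof (rule the_equality)
  show "z \<in> W \<and> v - z \<in> orthogonal_comp W" using assms by simp
  fix y assume y: "y \<in> W \<and> v - y \<in> orthogonal_comp W"
  have "y - z \<in> W" using assms(1,2) y by (simp add: subspace_diff)
  moreover have "y - z \<in> orthogonal_comp W"
    using subspace_diff[OF subspace_orthogonal_comp, of "v - z" W "v - y"] assms(3) y by simp
  ultimately have "y - z \<in> W \<inter> orthogonal_comp W" by (rule IntI)
  then show "y = z" unfolding orthogonal_Int_0[OF assms(1)] by simp
qed

lemma orth_proj_in_and_perp:
  fixes W :: "'a::euclidean_space set"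
  assumes "subspace W"
  shows "orth_proj W v \<in> W" and "v - orth_proj W v \<in> orthogonal_comp W"
proof -
  obtain w u where "v = w + u" "w \<in> W" "u \<in> orthogonal_comp W"
    using subspace_sum_orthogonal_comp[OF assms] set_plus_elim by blast
  then have "orth_proj W v = w" by (simp add: orth_proj_unique[OF assms])
  with \<open>v = w + u\<close> \<open>w \<in> W\<close> \<open>u \<in> orthogonal_comp W\<close>
  show "orth_proj W v \<in> W" and "v - orth_proj W v \<in> orthogonal_comp W" by simp_all
qed

lemma inner_orth_proj_perp:
  fixes W :: "'a::euclidean_space set"
  assumes "subspace W" and "y \<in> W"
  shows "y \<bullet> (v - orth_proj W v) = 0"
  using orth_proj_in_and_perp(2)[OF assms(1), of v] assms(2)
  unfolding orthogonal_comp_def orthogonal_def by simp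

lemma linear_orth_proj:
  fixes W :: "'a::euclidean_space set"
  assumes "subspace W"
  shows "linear (orth_proj W)"
proof
  note in_W = orth_proj_in_and_perp(1)[OF assms] and perp = orth_proj_in_and_perp(2)[OF assms]
  fix v w :: 'a and a :: real
  show "orth_proj W (v + w) = orth_proj W v + orth_proj W w"
  proof (rule orth_proj_unique[OF assms subspace_add[OF assms in_W in_W]])
    have "v + w - (orth_proj W v + orth_proj W w) = (v - orth_proj W v) + (w - orth_proj W w)"
      by simp
    then show "v + w - (orth_proj W v + orth_proj W w) \<in> orthogonal_comp W"
      using subspace_add[OF subspace_orthogonal_comp perp[of v] perp[of w]] by (simp only:)
  qed
  show "orth_proj W (a *\<^sub>R v) = a *\<^sub>R orth_proj W v"
  proof (rule orth_proj_unique[OF assms subspace_scale[OF assms in_W]])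
    have "a *\<^sub>R v - a *\<^sub>R orth_proj W v = a *\<^sub>R (v - orth_proj W v)"
      by (simp add: algebra_simps)
    then show "a *\<^sub>R v - a *\<^sub>R orth_proj W v \<in> orthogonal_comp W"
      using subspace_scale[OF subspace_orthogonal_comp perp[of v]] by (simp only:)
  qed
qed

lemma orth_proj_inner_commute:
  fixes W :: "'a::euclidean_space set"
  assumes "subspace W"
  shows "orth_proj W v \<bullet> w = v \<bullet> orth_proj W w"
  using inner_orth_proj_perp[OF assms orth_proj_in_and_perp(1)[OF assms], of v w]
    inner_orth_proj_perp[OF assms orth_proj_in_and_perp(1)[OF assms], of w v]
  by (simp add: inner_diff_right inner_commute)

lemma norm_orth_proj_le:
  fixes W :: "'a::euclidean_space set"
  assumes "subspace W"
  shows "norm (orth_proj W v) \<le> norm v"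
proof -
  have "(norm (orth_proj W v))\<^sup>2 = orth_proj W v \<bullet> v"
    using inner_orth_proj_perp[OF assms orth_proj_in_and_perp(1)[OF assms], of v v]
    by (simp add: inner_diff_right power2_norm_eq_inner)
  also have "\<dots> \<le> norm (orth_proj W v) * norm v" by (rule norm_cauchy_schwarz)
  finally have "norm (orth_proj W v) * norm (orth_proj W v) \<le> norm (orth_proj W v) * norm v"
    by (simp add: power2_eq_square)
  then show ?thesis by (cases "orth_proj W v = 0") (simp_all add: mult_le_cancel_left_pos)
qed

lemma orth_proj_orthogonal_comp_eq_0:
  fixes W :: "'a::euclidean_space set"
  assumes "subspace W" and "v \<in> orthogonal_comp W"
  shows "orth_proj W v = 0"
  using orth_proj_unique[OF assms(1) subspace_0[OF assms(1)]] assms(2) by simp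

lemma linear_Zproj: "linear (Zproj X j)"
  unfolding Zproj_def by (rule linear_orth_proj[OF subspace_orthogonal_comp])

lemma Zproj_inner_commute: "Zproj X j v \<bullet> w = v \<bullet> Zproj X j w"
  unfolding Zproj_def by (rule orth_proj_inner_commute[OF subspace_orthogonal_comp])

lemma norm_Zproj_le: "norm (Zproj X j v) \<le> norm v"
  unfolding Zproj_def by (rule norm_orth_proj_le[OF subspace_orthogonal_comp])

lemma Zproj_column_other:
  assumes "k \<noteq> j"
  shows "Zproj X j (column k X) = 0"
proof -
  have "column k X \<in> span {column k X | k. k \<noteq> j}"
    using assms by (intro span_base) blast
  then have "column k X \<in> orthogonal_comp (orthogonal_comp (span {column k X | k. k \<noteq> j}))"
    using orthogonal_comp_subset by blast
  then show ?thesis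
    unfolding Zproj_def by (rule orth_proj_orthogonal_comp_eq_0[OF subspace_orthogonal_comp])
qed

lemma column_matrix_matrix_mult:
  "column j (A ** B) = (\<Sum>k\<in>UNIV. B $ k $ j *\<^sub>R column k (A :: real^'k^'m))"
  by (simp add: vec_eq_iff column_def matrix_matrix_mult_def mult.commute)

lemma Zproj_column_matrix_mult:
  "Zproj X j (column j (X ** B)) = B $ j $ j *\<^sub>R Zproj X j (column j X)"
proof -
  have "Zproj X j (column j (X ** B)) = (\<Sum>k\<in>UNIV. B $ k $ j *\<^sub>R Zproj X j (column k X))"
    by (simp add: column_matrix_matrix_mult linear_sum[OF linear_Zproj] linear_scale[OF linear_Zproj])
  also have "\<dots> = (\<Sum>k\<in>UNIV. if k = j then B $ j $ j *\<^sub>R Zproj X j (column j X) else 0)"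
    by (rule sum.cong) (auto simp: Zproj_column_other)
  finally show ?thesis by simp
qed

lemma abs_sum_weighted_products_le:
  fixes r d :: "real^'p"
  assumes "\<And>j. \<bar>g j\<bar> \<le> K"
  shows "\<bar>\<Sum>j\<in>UNIV. r $ j * g j * d $ j\<bar> \<le> norm r * K * norm d"
proof -
  define abs_vec :: "real^'p \<Rightarrow> real^'p" where "abs_vec x = (\<chi> j. \<bar>x $ j\<bar>)" for x
  have norm_abs_vec: "norm (abs_vec x) = norm x" for x
    by (simp add: abs_vec_def norm_vec_def L2_set_def)
  have "\<bar>\<Sum>j\<in>UNIV. r $ j * g j * d $ j\<bar> \<le> (\<Sum>j\<in>UNIV. \<bar>r $ j\<bar> * K * \<bar>d $ j\<bar>)"
    using assms by (intro order.trans[OF sum_abs] sum_mono)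
      (simp add: abs_mult mult_mono mult_right_mono)
  also have "\<dots> = K * (abs_vec r \<bullet> abs_vec d)"
    by (simp add: abs_vec_def inner_vec_def sum_distrib_left mult_ac)
  also have "\<dots> \<le> K * (norm r * norm d)"
    using assms[of undefined] Cauchy_Schwarz_ineq2[of "abs_vec r" "abs_vec d"]
    by (intro mult_left_mono) (auto simp: norm_abs_vec)
  finally show ?thesis by (simp add: mult_ac)
qed

lemma abs_sum_weighted_column_inner_le:
  fixes W D :: "real^'p^'n"
  assumes "\<And>j. \<bar>g j\<bar> \<le> K" and "\<And>i. norm (row i W) \<le> R"
  shows "\<bar>\<Sum>j\<in>UNIV. g j * (column j W \<bullet> column j D)\<bar> \<le> R * K * norm21 D"
proof -
  have K0: "K \<ge> 0" using assms(1)[of undefined] by linarith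
  have "(\<Sum>j\<in>UNIV. g j * (column j W \<bullet> column j D))
      = (\<Sum>i\<in>UNIV. \<Sum>j\<in>UNIV. row i W $ j * g j * row i D $ j)"
    unfolding inner_vec_def sum_distrib_left by (subst sum.swap) (simp add: row_def column_def mult_ac)
  also have "\<bar>\<dots>\<bar> \<le> (\<Sum>i\<in>UNIV. \<bar>\<Sum>j\<in>UNIV. row i W $ j * g j * row i D $ j\<bar>)"
    by (rule sum_abs)
  also have "\<dots> \<le> (\<Sum>i\<in>UNIV. norm (row i W) * K * norm (row i D))"
    using abs_sum_weighted_products_le[of g K, OF assms(1)] by (intro sum_mono)
  also have "\<dots> \<le> (\<Sum>i\<in>UNIV. R * K * norm (row i D))"
    using assms(2) K0 by (intro sum_mono mult_right_mono) auto
  finally show ?thesis by (simp add: norm21_def sum_distrib_left)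
qed

lemma column_diff: "column j (A - B) = column j A - column j (B :: real^'k^'m)"
  by (simp add: vec_eq_iff column_def)

lemma column_scaleR: "column j (a *\<^sub>R A) = a *\<^sub>R column j (A :: real^'k^'m)"
  by (simp add: vec_eq_iff column_def)

lemma Zproj_column_unit_diag_mult:
  assumes "B $ j $ j = 1"
  shows "Zproj X j (column j ((a *\<^sub>R X) ** B - \<Theta>)) = Zproj X j (column j (a *\<^sub>R X - \<Theta>))"
proof -
  have "(a *\<^sub>R X) ** B = a *\<^sub>R (X ** B)" by (simp add: scalar_matrix_assoc)
  then show ?thesis
    using assms Zproj_column_matrix_mult[of X j B]
    by (simp add: column_diff column_scaleR linear_diff[OF linear_Zproj] linear_scale[OF linear_Zproj])
qed

lemma norm_column_le_normT2inf: "norm (column j A) \<le> normT2inf A"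
  unfolding normT2inf_def by (rule Max_ge) auto

definition Zproj_noise_level :: "real^'p^'n \<Rightarrow> real^'p^'n \<Rightarrow> real" where
  "Zproj_noise_level X A = Max (range (\<lambda>i. sqrt (\<Sum>j\<in>UNIV. (Zproj X j (column j A) $ i)\<^sup>2
                                          / (norm (Zproj X j (column j A)))\<^sup>2)))"

lemma Zproj_noise_level_row_le:
  "sqrt (\<Sum>j\<in>UNIV. (Zproj X j (column j A) $ i)\<^sup>2 / (norm (Zproj X j (column j A)))\<^sup>2)
     \<le> Zproj_noise_level X A"
  unfolding Zproj_noise_level_def by (rule Max_ge) auto

lemma Zproj_noise_level_nonneg: "0 \<le> Zproj_noise_level X A"
  by (rule order.trans[OF real_sqrt_ge_zero Zproj_noise_level_row_le]) (simp add: sum_nonneg)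

lemma Zproj_noise_level_column_scale:
  assumes "\<And>j. column j A = k j *\<^sub>R column j A'" and "\<And>j. k j \<noteq> 0"
  shows "Zproj_noise_level X A = Zproj_noise_level X A'"
  using assms by (simp add: Zproj_noise_level_def linear_scale[OF linear_Zproj] power_mult_distrib)

lemma tuning_parameter_dominates_noise_level:
  fixes c M lam :: real
  assumes "1 < c" and "0 \<le> M" and "(c + 1) / (c - 1) * M \<le> lam"
  shows "0 \<le> lam" and "M + lam \<le> lam * ((c - 1) / (c + 1) + 2)"
proof -
  have "0 \<le> (c + 1) / (c - 1) * M" using assms(1,2) by simp
  with assms(3) show lam0: "0 \<le> lam" by linarith
  have "M \<le> lam * ((c - 1) / (c + 1))" using assms(1,3) by (simp add: field_simps)
  with lam0 show "M + lam \<le> lam * ((c - 1) / (c + 1) + 2)" by (simp add: distrib_left)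
qed

lemma le_twice_add_sq_of_le_add_mult_sqrt:
  fixes S a b :: real
  assumes "0 \<le> S" and "S \<le> a + b * sqrt S"
  shows "S \<le> 2 * a + b\<^sup>2"
proof -
  have "0 \<le> (sqrt S - b)\<^sup>2" by simp
  then have "2 * (b * sqrt S) \<le> S + b\<^sup>2"
    using assms(1) by (simp add: power2_diff algebra_simps)
  with assms(2) show ?thesis by linarith
qed

lemma sum_norm_Zproj_sq_le:
  fixes \<xi> \<Delta> V :: "real^'p^'n" and lam :: real
  assumes basic: "\<And>j. (norm (Zproj X j (column j \<Delta>)))\<^sup>2
        = column j \<xi> \<bullet> Zproj X j (column j \<Delta>)
          - lam * norm (Zproj X j (column j \<xi> - column j \<Delta>)) * (column j V \<bullet> column j \<Delta>)"
    and lam: "0 \<le> lam"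
    and V_rows: "\<And>i. norm (row i V) \<le> 1"
  shows "(\<Sum>j\<in>UNIV. (norm (Zproj X j (column j \<Delta>)))\<^sup>2)
     \<le> 2 * (Zproj_noise_level X \<xi> + lam) * normT2inf \<xi> * norm21 \<Delta> + (lam * norm21 \<Delta>)\<^sup>2"
proof -
  define M where "M = Zproj_noise_level X \<xi>"
  define T where "T = normT2inf \<xi>"
  define N where "N = norm21 \<Delta>"
  define S where "S = (\<Sum>j\<in>UNIV. (norm (Zproj X j (column j \<Delta>)))\<^sup>2)"
  define W :: "real^'p^'n"
    where "W = (\<chi> i j. Zproj X j (column j \<xi>) $ i / norm (Zproj X j (column j \<xi>)))"
  have Zxi_le_T: "norm (Zproj X j (column j \<xi>)) \<le> T" for j
    unfolding T_def by (rule order.trans[OF norm_Zproj_le norm_column_le_normT2inf])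
  have ZDelta_le: "norm (Zproj X j (column j \<Delta>)) \<le> sqrt S" for j
    unfolding S_def by (rule real_le_rsqrt, rule member_le_sum) auto
  have S0: "0 \<le> S"
    by (simp add: S_def sum_nonneg)
  \<comment> \<open>also when Z^j \<xi>_j = 0, as then column j of W is 0 by x / 0 = 0\<close>
  have Zxi_eq: "Zproj X j (column j \<xi>) = norm (Zproj X j (column j \<xi>)) *\<^sub>R column j W" for j
    by (cases "Zproj X j (column j \<xi>) = 0") (auto simp: W_def column_def vec_eq_iff)
  have W_rows: "norm (row i W) \<le> M" for i
    using Zproj_noise_level_row_le[of X \<xi> i]
    by (simp add: M_def W_def row_def norm_vec_def L2_set_def power_divide)
  have noise: "(\<Sum>j\<in>UNIV. column j \<xi> \<bullet> Zproj X j (column j \<Delta>)) \<le> M * T * N"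
  proof -
    have "(\<Sum>j\<in>UNIV. column j \<xi> \<bullet> Zproj X j (column j \<Delta>))
        = (\<Sum>j\<in>UNIV. norm (Zproj X j (column j \<xi>)) * (column j W \<bullet> column j \<Delta>))"
      by (intro sum.cong refl) (metis Zproj_inner_commute Zxi_eq inner_scaleR_left)
    also have "\<dots> \<le> M * T * N"
      unfolding N_def using Zxi_le_T W_rows
      by (intro order.trans[OF abs_ge_self abs_sum_weighted_column_inner_le]) auto
    finally show ?thesis .
  qed
  define h where "h j = norm (Zproj X j (column j \<xi> - column j \<Delta>))" for j
  have h_le: "\<bar>h j\<bar> \<le> T + sqrt S" for j
  proof -
    have "h j \<le> norm (Zproj X j (column j \<xi>)) + norm (Zproj X j (column j \<Delta>))"
      unfolding h_def linear_diff[OF linear_Zproj] by (rule norm_triangle_ineq4)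
    then show ?thesis using Zxi_le_T[of j] ZDelta_le[of j] by (simp add: h_def)
  qed
  have penalty: "\<bar>\<Sum>j\<in>UNIV. h j * (column j V \<bullet> column j \<Delta>)\<bar> \<le> (T + sqrt S) * N"
    using abs_sum_weighted_column_inner_le[of h "T + sqrt S" V 1 \<Delta>] h_le V_rows
    by (simp add: N_def)
  have "S = (\<Sum>j\<in>UNIV. column j \<xi> \<bullet> Zproj X j (column j \<Delta>))
      - lam * (\<Sum>j\<in>UNIV. h j * (column j V \<bullet> column j \<Delta>))"
    unfolding S_def h_def basic by (simp add: sum_subtractf sum_distrib_left mult.assoc)
  also have "\<dots> \<le> M * T * N + lam * ((T + sqrt S) * N)"
    using noise penalty lam by (smt (verit) abs_le_D2 mult_left_mono mult_minus_right)
  also have "\<dots> = (M + lam) * T * N + (lam * N) * sqrt S"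
    by (simp add: algebra_simps)
  finally have "S \<le> 2 * ((M + lam) * T * N) + (lam * N)\<^sup>2"
    using S0 by (rule le_twice_add_sq_of_le_add_mult_sqrt[rotated])
  then show ?thesis by (simp add: S_def T_def N_def M_def mult_ac)
qed

theorem mainTheorem8:
  fixes X Y E :: "real^'p^'n"
    and \<Sigma> :: "real^'p^'p"
    and I O' :: "'n set"
    and M_E lam c :: real
    and \<Theta>hat V :: "real^'p^'n"
  assumes X_def: "X = Y + E"
    and Sigma_pd: "pos_def_mat \<Sigma>"
    and partition: "I \<union> O' = UNIV" "I \<inter> O' = {}"
    and E_inlier: "\<forall>i\<in>I. row i E = 0"
    and E_bound: "\<forall>i. norm (row i (E ** inv_sqrt_mat \<Sigma>)) \<le> M_E * sqrt (real CARD('p))"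
    and est: "\<forall>\<Theta>. objective X ((1 / sqrt (real CARD('n))) *\<^sub>R X) lam \<Theta>hat
                   \<le> objective X ((1 / sqrt (real CARD('n))) *\<^sub>R X) lam \<Theta>"
    and c_gt: "c > 1"
  defines "\<Omega> \<equiv> matrix_inv \<Sigma>"
    and "Xn \<equiv> (1 / sqrt (real CARD('n))) *\<^sub>R X"
  defines "B \<equiv> (\<chi> k j. \<Omega> $ k $ j / \<Omega> $ j $ j) :: real^'p^'p"
  defines "\<Theta>star \<equiv> (1 / sqrt (real CARD('n))) *\<^sub>R (E ** B)"
  defines "\<xi> \<equiv> Xn ** B - \<Theta>star"
  defines "\<epsilon> \<equiv> (\<chi> i j. sqrt (real CARD('n)) * sqrt (\<Omega> $ j $ j) * \<xi> $ i $ j) :: real^'p^'n"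
    and "\<Delta> \<equiv> \<Theta>hat - \<Theta>star"
  assumes Zeps_nz: "\<forall>j. Zproj X j (column j \<epsilon>) \<noteq> 0"
    and lam_ge: "lam \<ge> (c + 1) / (c - 1) *
       Max (range (\<lambda>i. sqrt (\<Sum>j\<in>UNIV. (Zproj X j (column j \<epsilon>) $ i)\<^sup>2
                                 / (norm (Zproj X j (column j \<epsilon>)))\<^sup>2)))"
    and V_rows: "\<forall>i. norm (row i V) \<le> 1"
    and V_eq: "\<forall>j. (norm (Zproj X j (column j \<Delta>)))\<^sup>2
        = column j \<xi> \<bullet> Zproj X j (column j \<Delta>)
          - lam * norm (Zproj X j (column j Xn - column j \<Theta>hat)) * (column j V \<bullet> column j \<Delta>)"
  shows "(\<Sum>j\<in>UNIV. (norm (Zproj X j (column j \<Delta>)))\<^sup>2)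
     \<le> 2 * lam * normT2inf \<xi> * norm21 \<Delta> * ((c - 1) / (c + 1) + 2) + (lam * norm21 \<Delta>)\<^sup>2"
proof -
  define k where "k j = sqrt (real CARD('n)) * sqrt (\<Omega> $ j $ j)" for j
  have column_eps: "column j \<epsilon> = k j *\<^sub>R column j \<xi>" for j
    by (simp add: vec_eq_iff column_def \<epsilon>_def k_def)
  have k_nz: "k j \<noteq> 0" for j
    using Zeps_nz column_eps by (metis linear_0[OF linear_Zproj] scale_zero_left)
  have B_diag: "B $ j $ j = 1" for j
    using k_nz[of j] by (simp add: B_def k_def)
  have "\<xi> - \<Delta> = Xn ** B - \<Theta>hat" by (simp add: \<xi>_def \<Delta>_def)
  then have residual: "Zproj X j (column j \<xi> - column j \<Delta>) = Zproj X j (column j Xn - column j \<Theta>hat)" for j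
    using Zproj_column_unit_diag_mult[OF B_diag] by (simp add: Xn_def column_diff[symmetric])
  have "(c + 1) / (c - 1) * Zproj_noise_level X \<xi> \<le> lam"
    using lam_ge Zproj_noise_level_column_scale[OF column_eps k_nz]
    unfolding Zproj_noise_level_def by simp
  note lam = tuning_parameter_dominates_noise_level[OF c_gt Zproj_noise_level_nonneg this]
  have TN0: "0 \<le> normT2inf \<xi> * norm21 \<Delta>"
    by (intro mult_nonneg_nonneg order.trans[OF norm_ge_zero norm_column_le_normT2inf])
      (simp add: norm21_def sum_nonneg)
  have "(\<Sum>j\<in>UNIV. (norm (Zproj X j (column j \<Delta>)))\<^sup>2)
      \<le> 2 * (Zproj_noise_level X \<xi> + lam) * (normT2inf \<xi> * norm21 \<Delta>) + (lam * norm21 \<Delta>)\<^sup>2"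
    using sum_norm_Zproj_sq_le[of X \<Delta> \<xi> lam V] V_eq V_rows lam(1)
    by (simp add: residual mult.assoc)
  also have "\<dots> \<le> 2 * (lam * ((c - 1) / (c + 1) + 2)) * (normT2inf \<xi> * norm21 \<Delta>)
                  + (lam * norm21 \<Delta>)\<^sup>2"
    using mult_right_mono[OF lam(2) TN0] by (simp only: mult.assoc)
  finally show ?thesis by (simp add: mult_ac)
qed

end
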